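(* Let $\pi,\tau\in S_n$ with $d(\pi,\tau)=1$, and let $\lambda=\lambda(\pi)$, $\mu=\lambda(\tau)$. Then \[\Delta(\lambda,\mu)\le\sqrt{n/2}.\]
   Context: Permutations are written in one-line notation. For $\pi\in S_n$, $\lambda(\pi)$ denotes the shape (a partition of $n$) of the tableaux associated with $\pi$ by the RSK correspondence. The distance $d(\pi,\tau)$ is the least number of adjacent transpositions $(k,k+1)$, $1\le k\le n-1$, whose successive left multiplication transforms $\pi$ into $\tau$. For partitions $\lambda,\mu$ of $n$ (parts padded with zeros), $\Delta(\lambda,\mu)=\frac12\sum_{i=1}^n|\lambda_i-\mu_i|$. *)

theory Defs
  imports Complex_Main
begin

definition is_perm :: "nat \<Rightarrow> nat list \<Rightarrow> bool" where
  "is_perm n w \<longleftrightarrow> distinct w \<and> set w = {1..n}"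

fun row_insert :: "nat \<Rightarrow> nat list \<Rightarrow> nat list \<times> nat option" where
  "row_insert x [] = ([x], None)"
| "row_insert x (y # ys) =
     (if x < y then (x # ys, Some y)
      else (case row_insert x ys of (r, b) \<Rightarrow> (y # r, b)))"

text \<open>Insertion into a tableau (list of rows, top row first).\<close>
fun tab_insert :: "nat \<Rightarrow> nat list list \<Rightarrow> nat list list" where
  "tab_insert x [] = [[x]]"
| "tab_insert x (r # rs) =
     (case row_insert x r of
        (r', None) \<Rightarrow> r' # rs
      | (r', Some y) \<Rightarrow> r' # tab_insert y rs)"

definition rsk_P :: "nat list \<Rightarrow> nat list list" where
  "rsk_P w = foldl (\<lambda>T x. tab_insert x T) [] w"

definition rsk_shape :: "nat list \<Rightarrow> nat list" where
  "rsk_shape w = map length (rsk_P w)"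

text \<open>Parts of a partition padded with zeros (0-based index).\<close>
definition part :: "nat list \<Rightarrow> nat \<Rightarrow> nat" where
  "part lam i = (if i < length lam then lam ! i else 0)"

definition Delta :: "nat \<Rightarrow> nat list \<Rightarrow> nat list \<Rightarrow> real" where
  "Delta n lam mu = (1/2) * (\<Sum>i<n. \<bar>real (part lam i) - real (part mu i)\<bar>)"

definition adj_swap :: "nat \<Rightarrow> nat \<Rightarrow> nat" where
  "adj_swap k x = (if x = k then k + 1 else if x = k + 1 then k else x)"

text \<open>Left multiplication by (k,k+1), 1 <= k <= n-1: (s_k o pi)(i) = s_k(pi(i)).\<close>
definition adj_step :: "nat \<Rightarrow> nat list \<Rightarrow> nat list \<Rightarrow> bool" where
  "adj_step n p q \<longleftrightarrow> (\<exists>k. 1 \<le> k \<and> k \<le> n - 1 \<and> q = map (adj_swap k) p)"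

definition perm_dist :: "nat \<Rightarrow> nat list \<Rightarrow> nat list \<Rightarrow> nat" where
  "perm_dist n p q = (LEAST m. (adj_step n ^^ m) p q)"

end

theory Submission
  imports Defs
begin

text \<open>By Greene's theorem, the largest union of k increasing subsequences of a word w has
  \<lambda>_1 + ... + \<lambda>_k letters and the largest union of k decreasing ones has
  \<lambda>'_1 + ... + \<lambda>'_k letters, where \<lambda> is the RSK shape of w: both statistics are invariant
  under Knuth moves, and w is Knuth equivalent to the reading word of its insertion tableau,
  from which they can be read off. Exchanging the values k and k + 1 in \<pi> changes each of these
  statistics by at most one, and always in the same direction, so \<lambda>(\<pi>) and \<lambda>(\<tau>) differ by at
  most one in every row and in every column. Let t be the number of rows where they differ. The
  larger parts of these rows are distinct, because the column they end in determines the row,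
  so they add up to at least t(t + 1)/2; on the other hand twice their sum is at most 2n + t.
  Hence t^2 \<le> 2n, and \<Delta> = t/2 \<le> sqrt (n/2).\<close>

section \<open>Increasing subsequences and Greene's invariants\<close>

fun precedes :: "nat list \<Rightarrow> nat \<Rightarrow> nat \<Rightarrow> bool" where
  "precedes [] x y = False"
| "precedes (z # zs) x y = ((z = x \<and> y \<in> set zs) \<or> precedes zs x y)"

lemma precedes_append [simp]:
  "precedes (xs @ ys) x y \<longleftrightarrow> precedes xs x y \<or> precedes ys x y \<or> (x \<in> set xs \<and> y \<in> set ys)"
  by (induction xs) auto

lemma precedes_in_set: "precedes w x y \<Longrightarrow> x \<in> set w \<and> y \<in> set w"
  by (induction w) auto

lemma precedes_asym: "distinct w \<Longrightarrow> precedes w x y \<Longrightarrow> \<not> precedes w y x"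
  by (induction w) (auto dest: precedes_in_set)

lemma precedes_trans: "distinct w \<Longrightarrow> precedes w x y \<Longrightarrow> precedes w y z \<Longrightarrow> precedes w x z"
  by (induction w) (auto dest: precedes_in_set)

lemma precedes_total:
  "x \<in> set w \<Longrightarrow> y \<in> set w \<Longrightarrow> x \<noteq> y \<Longrightarrow> precedes w x y \<or> precedes w y x"
  by (induction w) auto

lemma precedes_rev [simp]: "precedes (rev w) x y \<longleftrightarrow> precedes w y x"
  by (induction w) auto

lemma precedes_map: "precedes w x y \<Longrightarrow> precedes (map f w) (f x) (f y)"
  by (induction w) auto

lemma precedes_map_inj: "inj f \<Longrightarrow> precedes (map f w) (f x) (f y) \<longleftrightarrow> precedes w x y"
  by (induction w) (auto simp: inj_eq)

lemma precedes_nth: "j < j' \<Longrightarrow> j' < length w \<Longrightarrow> precedes w (w ! j) (w ! j')"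
proof (induction w arbitrary: j j')
  case (Cons z w)
  then show ?case
    by (cases j; cases j') auto
qed simp

lemma precedes_obtain_nth:
  assumes "precedes w x y"
  obtains i j where "i < j" "j < length w" "w ! i = x" "w ! j = y"
  using assms
proof (induction w arbitrary: thesis)
  case (Cons z w)
  show ?case
  proof (cases "z = x \<and> y \<in> set w")
    case True
    then obtain j where "j < length w" "w ! j = y" by (metis in_set_conv_nth)
    then show ?thesis using True Cons.prems(1)[of 0 "Suc j"] by auto
  next
    case False
    then obtain i j where "i < j" "j < length w" "w ! i = x" "w ! j = y"
      using Cons by auto
    then show ?thesis using Cons.prems(1)[of "Suc i" "Suc j"] by auto
  qed
qed simp

text \<open>Greene's invariant greene w k is the largest such S; decreasing subsequences are
  handled through greene (rev w) k.\<close>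
definition increasing_colouring :: "nat list \<Rightarrow> nat \<Rightarrow> nat set \<Rightarrow> (nat \<Rightarrow> nat) \<Rightarrow> bool" where
  "increasing_colouring w k S col \<longleftrightarrow> S \<subseteq> set w \<and> (\<forall>x\<in>S. col x < k) \<and>
     (\<forall>x\<in>S. \<forall>y\<in>S. x < y \<longrightarrow> col x = col y \<longrightarrow> precedes w x y)"

definition k_increasing :: "nat list \<Rightarrow> nat \<Rightarrow> nat set \<Rightarrow> bool" where
  "k_increasing w k S \<longleftrightarrow> (\<exists>col. increasing_colouring w k S col)"

definition greene :: "nat list \<Rightarrow> nat \<Rightarrow> nat" where
  "greene w k = Max (card ` {S. k_increasing w k S})"

lemma increasing_colouringI:
  assumes "S \<subseteq> set w" "\<And>x. x \<in> S \<Longrightarrow> col x < k"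
    "\<And>x y. x \<in> S \<Longrightarrow> y \<in> S \<Longrightarrow> x < y \<Longrightarrow> col x = col y \<Longrightarrow> precedes w x y"
  shows "increasing_colouring w k S col"
  using assms unfolding increasing_colouring_def by blast

lemma increasing_colouringD:
  assumes "increasing_colouring w k S col"
  shows "S \<subseteq> set w" "\<And>x. x \<in> S \<Longrightarrow> col x < k"
    "\<And>x y. x \<in> S \<Longrightarrow> y \<in> S \<Longrightarrow> x < y \<Longrightarrow> col x = col y \<Longrightarrow> precedes w x y"
  using assms unfolding increasing_colouring_def by blast+

lemma k_increasing_subset: "k_increasing w k S \<Longrightarrow> S \<subseteq> set w"
  unfolding k_increasing_def increasing_colouring_def by blast

lemma finite_k_increasing: "finite {S. k_increasing w k S}"
  by (rule finite_subset[of _ "Pow (set w)"]) (auto dest: k_increasing_subset)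

lemma card_le_greene: "k_increasing w k S \<Longrightarrow> card S \<le> greene w k"
  unfolding greene_def using finite_k_increasing by (intro Max_ge) auto

lemma greene_attained:
  obtains S where "k_increasing w k S" "card S = greene w k"
proof -
  have "k_increasing w k {}"
    unfolding k_increasing_def increasing_colouring_def by simp
  then have "greene w k \<in> card ` {S. k_increasing w k S}"
    unfolding greene_def using finite_k_increasing by (intro Max_in) auto
  then show ?thesis using that by auto
qed

lemma greene_le_greene:
  assumes "\<And>S. k_increasing u k S \<Longrightarrow> \<exists>S'. k_increasing v k S' \<and> card S \<le> card S'"
  shows "greene u k \<le> greene v k"
proof -
  obtain S where "k_increasing u k S" "card S = greene u k" by (rule greene_attained)
  with assms obtain S' where "k_increasing v k S'" "card S \<le> card S'" by blast
  then show ?thesis using card_le_greene[of v k S'] \<open>card S = greene u k\<close> by simp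
qed

lemma increasing_colouring_rev_map:
  assumes col: "increasing_colouring w k S col"
    and anti: "\<And>x y. x \<in> set w \<Longrightarrow> y \<in> set w \<Longrightarrow> x < y \<Longrightarrow> f y < f x"
  shows "increasing_colouring (rev (map f w)) k (f ` S) (col \<circ> inv_into (set w) f)"
proof -
  note S = increasing_colouringD[OF col]
  have inj: "inj_on f (set w)"
    by (rule inj_onI) (metis anti less_irrefl nat_neq_iff)
  have inv: "inv_into (set w) f (f x) = x" if "x \<in> S" for x
    using inv_into_f_f[OF inj] that S(1) by blast
  show ?thesis
  proof (rule increasing_colouringI)
    show "f ` S \<subseteq> set (rev (map f w))" using S(1) by auto
    show "(col \<circ> inv_into (set w) f) x' < k" if "x' \<in> f ` S" for x'
      using that S(2) inv by auto
    fix x' y' assume "x' \<in> f ` S" "y' \<in> f ` S" "x' < y'"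
      and same: "(col \<circ> inv_into (set w) f) x' = (col \<circ> inv_into (set w) f) y'"
    then obtain x y where xy: "x \<in> S" "y \<in> S" "x' = f x" "y' = f y" "f x < f y" by auto
    then have "y < x" using anti S(1) by (metis less_asym nat_neq_iff subsetD)
    then have "precedes w y x" using S(3) xy same inv by simp
    then show "precedes (rev (map f w)) x' y'" using xy by (simp add: precedes_map)
  qed
qed

section \<open>Knuth moves preserve Greene's invariants\<close>

lemma precedes_swap:
  assumes "distinct (p @ [a, b] @ s)"
  shows "precedes (p @ [b, a] @ s) x y \<longleftrightarrow>
    (precedes (p @ [a, b] @ s) x y \<and> \<not> (x = a \<and> y = b)) \<or> (x = b \<and> y = a)"
  using assms by (auto dest: precedes_in_set)

lemma increasing_colouring_swap:
  assumes d: "distinct (p @ [a, b] @ s)" and col: "increasing_colouring (p @ [a, b] @ s) k S col"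
    and ab: "\<not> (a \<in> S \<and> b \<in> S \<and> a < b \<and> col a = col b)"
  shows "increasing_colouring (p @ [b, a] @ s) k S col"
proof (rule increasing_colouringI)
  note S = increasing_colouringD[OF col]
  show "S \<subseteq> set (p @ [b, a] @ s)" using S(1) by auto
  show "x \<in> S \<Longrightarrow> col x < k" for x by (rule S(2))
  fix x y assume "x \<in> S" "y \<in> S" "x < y" "col x = col y"
  then show "precedes (p @ [b, a] @ s) x y"
    using S(3)[of x y] precedes_swap[OF d] ab by auto
qed

lemma k_increasing_swap_descent:
  assumes "distinct (p @ [b, a] @ s)" "a < b" "k_increasing (p @ [b, a] @ s) k S"
  shows "k_increasing (p @ [a, b] @ s) k S"
  using assms increasing_colouring_swap[of p b a s k S] unfolding k_increasing_def by auto

lemma knuth1_exchange: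
  assumes d: "distinct (p @ [c, a, b] @ s)" and ac: "a < c" and cb: "c < b"
    and col: "increasing_colouring (p @ [c, a, b] @ s) k S col"
    and aS: "a \<in> S" and bS: "b \<in> S" and ab: "col a = col b" and cS: "c \<notin> S"
  shows "increasing_colouring (p @ [c, a, b] @ s) k (insert c (S - {a})) (col(c := col a))"
proof (rule increasing_colouringI)
  let ?u = "p @ [c, a, b] @ s"
  note S = increasing_colouringD[OF col]
  show "insert c (S - {a}) \<subseteq> set ?u" using S(1) by auto
  show "(col(c := col a)) x < k" if "x \<in> insert c (S - {a})" for x using that S(2) aS by auto
  fix x y assume xS: "x \<in> insert c (S - {a})" and yS: "y \<in> insert c (S - {a})" and xy: "x < y"
    and same: "(col(c := col a)) x = (col(c := col a)) y"
  consider "x = c" | "y = c" | "x \<noteq> c" "y \<noteq> c" by blast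
  then show "precedes ?u x y"
  proof cases
    case 1
    then have "y \<in> S" "y \<noteq> a" "col y = col a" using yS xy same cS by auto
    then have "precedes ?u a y" using S(3)[of a y] aS xy 1 ac by auto
    then show ?thesis using 1 \<open>y \<noteq> a\<close> d by (auto dest: precedes_in_set)
  next
    case 2
    then have xS': "x \<in> S" "x \<noteq> a" "col x = col a" using xS xy same by auto
    show ?thesis
    proof (cases "x < a")
      case True
      then have "precedes ?u x a" using S(3)[of x a] xS' aS by auto
      then show ?thesis using 2 d xy by (auto dest: precedes_in_set)
    next
      case False
      then have "precedes ?u a x" "precedes ?u x b"
        using S(3)[of a x] S(3)[of x b] xS' aS bS ab xy 2 cb by auto
      then show ?thesis using d xS' by (auto dest: precedes_in_set)
    qed
  next
    case 3
    then show ?thesis using xS yS same S(3)[of x y] xy by auto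
  qed
qed

text \<open>The chain through a and b and the chain through c exchange their tails above b
  and above c respectively.\<close>
lemma knuth1_recolour:
  assumes d: "distinct (p @ [c, a, b] @ s)" and ac: "a < c" and cb: "c < b"
    and col: "increasing_colouring (p @ [c, a, b] @ s) k S col"
    and aS: "a \<in> S" and bS: "b \<in> S" and cS: "c \<in> S"
  obtains col' where "increasing_colouring (p @ [c, a, b] @ s) k S col'" "col' a \<noteq> col' b"
proof (cases "col a = col b")
  case True
  let ?u = "p @ [c, a, b] @ s"
  note S = increasing_colouringD[OF col]
  have ca: "col c \<noteq> col a"
  proof
    assume "col c = col a"
    then have "precedes ?u a c" using S(3)[of a c] aS cS ac by auto
    then show False using d by (auto dest: precedes_in_set)
  qed
  have nobetween: False if "y \<in> S" "col y = col a" "a < y" "y < b" for y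
  proof -
    have "precedes ?u a y" "precedes ?u y b" using S(3)[of a y] S(3)[of y b] that aS bS True by auto
    then show False using d by (auto dest: precedes_in_set)
  qed
  define col' where "col' x =
    (if col x = col a \<and> b \<le> x then col c else if col x = col c \<and> c < x then col a else col x)" for x
  have "increasing_colouring ?u k S col'"
  proof (rule increasing_colouringI)
    show "S \<subseteq> set ?u" by (rule S(1))
    show "x \<in> S \<Longrightarrow> col' x < k" for x using S(2) aS cS unfolding col'_def by auto
    fix x y assume xS: "x \<in> S" and yS: "y \<in> S" and xy: "x < y" and same: "col' x = col' y"
    consider "col x = col a" "b \<le> x" | "col x = col c" "c < x"
      | "\<not> (col x = col a \<and> b \<le> x)" "\<not> (col x = col c \<and> c < x)"
      by blast
    then show "precedes ?u x y"
    proof cases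
      case 1
      then have "col y = col a" using same xy ca cb unfolding col'_def by (auto split: if_splits)
      then show ?thesis using S(3)[of x y] xS yS xy 1 by auto
    next
      case 2
      then have "col y = col c \<or> (col y = col a \<and> y < b)"
        using same xy ca unfolding col'_def by (auto split: if_splits)
      then show ?thesis
      proof
        assume "col y = col a \<and> y < b"
        then have "y \<le> a" using nobetween[of y] yS by force
        then show ?thesis using 2 xy ac by auto
      qed (use S(3)[of x y] xS yS xy 2 in auto)
    next
      case 3
      show ?thesis
      proof (cases "col y = col a \<and> b \<le> y")
        case True
        then have "col x = col c" "x \<le> c" using same 3 ca unfolding col'_def by (auto split: if_splits)
        then have "precedes ?u x c \<or> x = c" using S(3)[of x c] xS cS by force
        moreover have "precedes ?u a y \<or> y = a" using S(3)[of a y] aS yS True ac cb by auto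
        ultimately show ?thesis using d cS True ac cb by (auto dest: precedes_in_set)
      next
        case False
        show ?thesis
        proof (cases "col y = col c \<and> c < y")
          case True
          then have "col x = col a" "x < b" using same 3 ca unfolding col'_def by (auto split: if_splits)
          then have "x \<le> a" using nobetween[of x] xS by force
          then have "precedes ?u x a \<or> x = a" using S(3)[of x a] xS aS \<open>col x = col a\<close> by force
          moreover have "precedes ?u c y" using S(3)[of c y] cS yS True by auto
          moreover have "y \<noteq> a" "y \<noteq> b" using True ca \<open>col a = col b\<close> by auto
          ultimately show ?thesis using d by (auto dest: precedes_in_set)
        next
          case False
          then have "col x = col y" using same 3 \<open>\<not> (col y = col a \<and> b \<le> y)\<close> unfolding col'_def by auto
          then show ?thesis using S(3)[of x y] xS yS xy by auto
        qed
      qed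
    qed
  qed
  moreover have "col' a \<noteq> col' b" using ca ac cb True unfolding col'_def by auto
  ultimately show ?thesis by (rule that)
qed (use col in blast)

lemma k_increasing_knuth1:
  assumes d: "distinct (p @ [c, a, b] @ s)" and ac: "a < c" and cb: "c < b"
    and S: "k_increasing (p @ [c, a, b] @ s) k S"
  shows "\<exists>S'. k_increasing (p @ [c, b, a] @ s) k S' \<and> card S \<le> card S'"
proof -
  from S obtain col where col: "increasing_colouring (p @ [c, a, b] @ s) k S col"
    unfolding k_increasing_def by blast
  have d': "distinct ((p @ [c]) @ [a, b] @ s)" using d by simp
  have swap: "k_increasing (p @ [c, b, a] @ s) k S'"
    if "increasing_colouring (p @ [c, a, b] @ s) k S' col'" "\<not> (a \<in> S' \<and> b \<in> S' \<and> col' a = col' b)"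
    for S' col'
    using increasing_colouring_swap[OF d', of k S' col'] that unfolding k_increasing_def by auto
  have fin: "finite S" using increasing_colouringD(1)[OF col] by (rule finite_subset) simp
  show ?thesis
  proof (cases "a \<in> S \<and> b \<in> S \<and> col a = col b")
    case False
    then show ?thesis using swap[OF col] by blast
  next
    case True
    show ?thesis
    proof (cases "c \<in> S")
      case False
      have "card (insert c (S - {a})) = card S"
        using fin True False by (simp add: card_insert_if) (metis Suc_pred card_gt_0_iff empty_iff)
      moreover have "k_increasing (p @ [c, b, a] @ s) k (insert c (S - {a}))"
        using True ac by (intro swap[OF knuth1_exchange[OF d ac cb col _ _ _ False]]) auto
      ultimately show ?thesis by (metis order_refl)
    next
      case True
      with \<open>a \<in> S \<and> b \<in> S \<and> col a = col b\<close> obtain col'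
        where "increasing_colouring (p @ [c, a, b] @ s) k S col'" "col' a \<noteq> col' b"
        using knuth1_recolour[OF d ac cb col] by blast
      then show ?thesis using swap by blast
    qed
  qed
qed

lemma k_increasing_rev_complement:
  assumes S: "k_increasing w k S" and M: "\<forall>x\<in>set w. x \<le> M"
  shows "k_increasing (rev (map (\<lambda>x. M - x) w)) k ((\<lambda>x. M - x) ` S)"
    and "card ((\<lambda>x. M - x) ` S) = card S"
proof -
  from S obtain col where col: "increasing_colouring w k S col"
    unfolding k_increasing_def by blast
  have "x \<in> set w \<Longrightarrow> y \<in> set w \<Longrightarrow> x < y \<Longrightarrow> M - y < M - x" for x y
    using M by auto
  then show "k_increasing (rev (map (\<lambda>x. M - x) w)) k ((\<lambda>x. M - x) ` S)"
    using increasing_colouring_rev_map[OF col] unfolding k_increasing_def by blast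
  have "inj_on (\<lambda>x. M - x) S"
    using M k_increasing_subset[OF S] unfolding inj_on_def by (metis diff_diff_cancel subsetD)
  then show "card ((\<lambda>x. M - x) ` S) = card S" by (rule card_image)
qed

text \<open>The second Knuth move is the image of the first one under reversal and complementation
  of the letters.\<close>
lemma k_increasing_knuth2:
  assumes d: "distinct (p @ [a, b, c] @ s)" and ac: "a < c" and cb: "c < b"
    and S: "k_increasing (p @ [a, b, c] @ s) k S"
  shows "\<exists>S'. k_increasing (p @ [b, a, c] @ s) k S' \<and> card S \<le> card S'"
proof -
  let ?u = "p @ [a, b, c] @ s"
  define M where "M = Max (set ?u)"
  define f where "f x = M - x" for x
  have M: "\<forall>x\<in>set ?u. x \<le> M" unfolding M_def by (intro ballI Max_ge) auto
  have ff: "map f (map f xs) = xs" if "set xs \<subseteq> set ?u" for xs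
    unfolding map_map using that M by (intro map_idI) (auto simp: f_def)
  have inj: "inj_on f (set ?u)" by (intro inj_onI) (metis M diff_diff_cancel f_def)
  have "distinct (map f ?u)" using d inj distinct_map by blast
  moreover have "rev (map f ?u) = rev (map f s) @ [f c, f b, f a] @ rev (map f p)" by simp
  ultimately have d': "distinct (rev (map f s) @ [f c, f b, f a] @ rev (map f p))"
    by (metis distinct_rev)
  have fbca: "f b < f c" "f c < f a" using M ac cb by (auto simp: f_def)
  have "k_increasing (rev (map f s) @ [f c, f b, f a] @ rev (map f p)) k (f ` S)"
    and cardfS: "card (f ` S) = card S"
    using k_increasing_rev_complement[OF S M] unfolding f_def[symmetric] by simp_all
  from k_increasing_knuth1[OF d' fbca this(1)] obtain S'
    where S': "k_increasing (rev (map f s) @ [f c, f a, f b] @ rev (map f p)) k S'"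
      and le: "card (f ` S) \<le> card S'" by blast
  have M': "\<forall>x\<in>set (rev (map f s) @ [f c, f a, f b] @ rev (map f p)). x \<le> M"
    by (auto simp: f_def)
  have "rev (map f (rev (map f s) @ [f c, f a, f b] @ rev (map f p))) = p @ [b, a, c] @ s"
    using ff[of p] ff[of s] M by (auto simp: rev_map f_def)
  then show ?thesis
    using k_increasing_rev_complement[OF S' M'] le cardfS unfolding f_def[symmetric] by auto
qed

inductive knuth_step :: "nat list \<Rightarrow> nat list \<Rightarrow> bool" where
  knuth_yzx: "x < y \<Longrightarrow> y < z \<Longrightarrow> knuth_step (p @ [y, z, x] @ s) (p @ [y, x, z] @ s)"
| knuth_xzy: "x < y \<Longrightarrow> y < z \<Longrightarrow> knuth_step (p @ [x, z, y] @ s) (p @ [z, x, y] @ s)"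

lemma knuth_step_set: "knuth_step u v \<Longrightarrow> set u = set v \<and> (distinct u \<longleftrightarrow> distinct v)"
  by (induction rule: knuth_step.induct) auto

lemma greene_knuth_step:
  assumes "knuth_step u v" "distinct u"
  shows "greene u k = greene v k"
  using assms
proof (induction rule: knuth_step.induct)
  case (knuth_yzx x y z p s)
  have "greene (p @ [y, z, x] @ s) k \<le> greene (p @ [y, x, z] @ s) k"
    using k_increasing_swap_descent[of "p @ [y]" z x s k] knuth_yzx
    by (intro greene_le_greene) force
  moreover have "greene (p @ [y, x, z] @ s) k \<le> greene (p @ [y, z, x] @ s) k"
    using k_increasing_knuth1[of p y x z s k] knuth_yzx by (intro greene_le_greene) auto
  ultimately show ?case by simp
next
  case (knuth_xzy x y z p s)
  have "greene (p @ [z, x, y] @ s) k \<le> greene (p @ [x, z, y] @ s) k"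
    using k_increasing_swap_descent[of p z x "y # s" k] knuth_xzy
    by (intro greene_le_greene) force
  moreover have "greene (p @ [x, z, y] @ s) k \<le> greene (p @ [z, x, y] @ s) k"
    using k_increasing_knuth2[of p x z y s k] knuth_xzy by (intro greene_le_greene) auto
  ultimately show ?case by simp
qed

lemma knuth_step_rev: "knuth_step u v \<Longrightarrow> knuth_step (rev u) (rev v)"
proof (induction rule: knuth_step.induct)
  case (knuth_yzx x y z p s)
  then show ?case using knuth_step.knuth_xzy[of x y z "rev s" "rev p"] by simp
next
  case (knuth_xzy x y z p s)
  then show ?case using knuth_step.knuth_yzx[of x y z "rev s" "rev p"] by simp
qed

lemma knuth_step_append: "knuth_step u v \<Longrightarrow> knuth_step (q @ u @ r) (q @ v @ r)"
proof (induction rule: knuth_step.induct)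
  case (knuth_yzx x y z p s)
  then show ?case using knuth_step.knuth_yzx[of x y z "q @ p" "s @ r"] by simp
next
  case (knuth_xzy x y z p s)
  then show ?case using knuth_step.knuth_xzy[of x y z "q @ p" "s @ r"] by simp
qed

lemma equivclp_knuth_step_map:
  assumes "equivclp knuth_step u v" "\<And>u v. knuth_step u v \<Longrightarrow> knuth_step (f u) (f v)"
  shows "equivclp knuth_step (f u) (f v)"
  using assms(1) by induction (auto intro: equivclp_into_equivclp assms(2))

lemma knuth_equiv_append:
  "equivclp knuth_step u v \<Longrightarrow> equivclp knuth_step (q @ u @ r) (q @ v @ r)"
  using equivclp_knuth_step_map[of u v "\<lambda>w. q @ w @ r"] knuth_step_append by blast

lemma knuth_equiv_rev: "equivclp knuth_step u v \<Longrightarrow> equivclp knuth_step (rev u) (rev v)"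
  using equivclp_knuth_step_map[of u v rev] knuth_step_rev by blast

lemma knuth_equiv_set:
  "equivclp knuth_step u v \<Longrightarrow> set u = set v \<and> (distinct u \<longleftrightarrow> distinct v)"
  by (induction rule: equivclp_induct) (auto dest: knuth_step_set)

lemma greene_knuth_equiv:
  assumes "equivclp knuth_step u v" "distinct u"
  shows "greene u k = greene v k"
  using assms
proof (induction rule: equivclp_induct)
  case (step v w)
  then have "distinct v" using knuth_equiv_set by blast
  then show ?case using step greene_knuth_step knuth_step_set by metis
qed simp

section \<open>Schensted insertion\<close>

lemma rsk_P_snoc [simp]: "rsk_P (w @ [x]) = tab_insert x (rsk_P w)"
  by (simp add: rsk_P_def)

lemma row_insert_set: "row_insert x r = (r', b) \<Longrightarrow> set r' \<union> set_option b = insert x (set r)"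
proof (induction x r arbitrary: r' b rule: row_insert.induct)
  case (2 x y ys)
  show ?case
  proof (cases "x < y")
    case False
    obtain r b' where rb: "row_insert x ys = (r, b')" by fastforce
    then have "r' = y # r" "b = b'" using "2.prems" False by auto
    then show ?thesis using "2.IH"[OF False rb] by auto
  qed (use "2.prems" in auto)
qed simp

lemma row_insert_length:
  "row_insert x r = (r', b) \<Longrightarrow> length r' = (if b = None then Suc (length r) else length r)"
proof (induction x r arbitrary: r' b rule: row_insert.induct)
  case (2 x y ys)
  show ?case
  proof (cases "x < y")
    case False
    obtain r b' where rb: "row_insert x ys = (r, b')" by fastforce
    then have "r' = y # r" "b = b'" using "2.prems" False by auto
    then show ?thesis using "2.IH"[OF False rb] by simp
  qed (use "2.prems" in auto)
qed simp

lemma tab_insert_set: "set (concat (tab_insert x T)) = insert x (set (concat T))"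
proof (induction T arbitrary: x)
  case (Cons r T)
  obtain r' b where rb: "row_insert x r = (r', b)" by fastforce
  then show ?case
    using row_insert_set[OF rb] Cons[of "the b"] by (cases b) auto
qed simp

lemma tab_insert_length: "length (concat (tab_insert x T)) = Suc (length (concat T))"
proof (induction T arbitrary: x)
  case (Cons r T)
  obtain r' b where rb: "row_insert x r = (r', b)" by fastforce
  then show ?case
    using row_insert_length[OF rb] Cons[of "the b"] by (cases b) auto
qed simp

lemma rsk_P_Nil [simp]: "rsk_P [] = []"
  by (simp add: rsk_P_def)

lemma set_rsk_P: "set (concat (rsk_P w)) = set w"
proof (induction w rule: rev_induct)
  case (snoc x w)
  then show ?case using tab_insert_set[of x "rsk_P w"] by simp
qed simp

lemma length_rsk_P: "length (concat (rsk_P w)) = length w"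
proof (induction w rule: rev_induct)
  case (snoc x w)
  then show ?case using tab_insert_length[of x "rsk_P w"] by simp
qed simp

lemma distinct_rsk_P: "distinct (concat (rsk_P w)) \<longleftrightarrow> distinct w"
proof -
  have "distinct xs \<longleftrightarrow> card (set xs) = length xs" for xs :: "nat list"
    using card_distinct distinct_card by blast
  then show ?thesis using set_rsk_P length_rsk_P by simp
qed

lemma row_insert_cases:
  assumes "sorted_wrt (<) r" "x \<notin> set r"
  obtains "row_insert x r = (r @ [x], None)" "\<forall>z\<in>set r. z < x"
  | R1 y R2 where "r = R1 @ y # R2" "\<forall>z\<in>set R1. z < x" "x < y"
      "row_insert x r = (R1 @ x # R2, Some y)"
  using assms
proof (induction r arbitrary: thesis)
  case (Cons a r)
  show ?case
  proof (cases "x < a")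
    case True
    then show ?thesis using Cons.prems(2)[of "[]"] by auto
  next
    case False
    then have "a < x" using Cons.prems by auto
    show ?thesis
    proof (rule Cons.IH)
      show "sorted_wrt (<) r" "x \<notin> set r" using Cons.prems by auto
      show ?thesis if "row_insert x r = (r @ [x], None)" "\<forall>z\<in>set r. z < x"
        using that Cons.prems(1) False \<open>a < x\<close> by auto
      show ?thesis if "r = R1 @ y # R2" "\<forall>z\<in>set R1. z < x" "x < y"
        "row_insert x r = (R1 @ x # R2, Some y)" for R1 y R2
        using that Cons.prems(2)[of "a # R1" y R2] False \<open>a < x\<close> by auto
    qed
  qed
qed simp

lemma row_insert_cases_nth:
  assumes "sorted_wrt (<) r" "x \<notin> set r"
  obtains "row_insert x r = (r @ [x], None)" "\<forall>z\<in>set r. z < x"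
  | i where "i < length r" "row_insert x r = (r[i := x], Some (r ! i))" "x < r ! i"
      "\<forall>j<i. r ! j < x"
proof (cases rule: row_insert_cases[OF assms])
  case (2 R1 y R2)
  have "r[length R1 := x] = R1 @ x # R2" "r ! length R1 = y" using 2(1) by (auto simp: list_update_append)
  moreover have "\<forall>j<length R1. r ! j < x" using 2(1,2) by (auto simp: nth_append)
  ultimately show ?thesis using 2 that(2)[of "length R1"] by auto
qed (use that in blast)

lemma row_insert_sorted:
  assumes "sorted_wrt (<) r" "x \<notin> set r"
  shows "sorted_wrt (<) (fst (row_insert x r))"
  by (cases rule: row_insert_cases[OF assms]) (use assms in \<open>auto simp: sorted_wrt_append\<close>)

definition fits_below :: "nat list \<Rightarrow> nat list \<Rightarrow> bool" where
  "fits_below r1 r2 \<longleftrightarrow> length r2 \<le> length r1 \<and> (\<forall>j<length r2. r1 ! j < r2 ! j)"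

fun is_tableau :: "nat list list \<Rightarrow> bool" where
  "is_tableau [] = True"
| "is_tableau [r] = (r \<noteq> [] \<and> sorted_wrt (<) r)"
| "is_tableau (r1 # r2 # rs) =
     (r1 \<noteq> [] \<and> sorted_wrt (<) r1 \<and> fits_below r1 r2 \<and> is_tableau (r2 # rs))"

lemma is_tableau_Cons: "is_tableau (r # rs) \<Longrightarrow> is_tableau rs"
  by (cases rs) auto

lemma is_tableau_rows: "is_tableau T \<Longrightarrow> r \<in> set T \<Longrightarrow> sorted_wrt (<) r \<and> r \<noteq> []"
  by (induction T rule: is_tableau.induct) auto

lemma fits_below_trans: "fits_below a b \<Longrightarrow> fits_below b c \<Longrightarrow> fits_below a c"
  unfolding fits_below_def by (meson dual_order.strict_trans le_trans less_le_trans)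

lemma is_tableau_fits_below_Suc:
  "is_tableau T \<Longrightarrow> Suc i < length T \<Longrightarrow> fits_below (T ! i) (T ! Suc i)"
proof (induction T arbitrary: i rule: is_tableau.induct)
  case (3 r1 r2 rs)
  then show ?case by (cases i) auto
qed auto

lemma is_tableau_fits_below:
  "is_tableau T \<Longrightarrow> i < i' \<Longrightarrow> i' < length T \<Longrightarrow> fits_below (T ! i) (T ! i')"
proof (induction i' arbitrary: i)
  case (Suc i')
  have "fits_below (T ! i') (T ! Suc i')" using Suc.prems by (intro is_tableau_fits_below_Suc)
  moreover have "fits_below (T ! i) (T ! i')" if "i \<noteq> i'" using that Suc by simp
  ultimately show ?case using fits_below_trans by (cases "i = i'") auto
qed simp

text \<open>The row r0 bumps its entry at position i into the row r1 below it.\<close>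
lemma fits_below_row_insert:
  assumes s0: "sorted_wrt (<) r0" and i: "i < length r0" and xi: "x < r0 ! i"
    and xj: "\<forall>j<i. r0 ! j < x" and fits: "fits_below r0 r1" and s1: "sorted_wrt (<) r1"
    and yn: "r0 ! i \<notin> set r1"
  shows "fits_below (r0[i := x]) (fst (row_insert (r0 ! i) r1))"
proof -
  let ?y = "r0 ! i"
  have len: "length r1 \<le> length r0" and col: "\<And>j. j < length r1 \<Longrightarrow> r0 ! j < r1 ! j"
    using fits by (auto simp: fits_below_def)
  have below: "r0[i := x] ! j < ?y" if "j \<le> i" for j
    using that i xi s0 by (cases "j = i") (auto simp: sorted_wrt_iff_nth_less)
  show ?thesis
  proof (cases rule: row_insert_cases_nth[OF s1 yn])
    case 1
    have "length r1 \<le> i"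
      using 1 col[of i] by (metis in_set_conv_nth less_asym not_le)
    show ?thesis unfolding fits_below_def
    proof (intro conjI allI impI)
      show "length (fst (row_insert ?y r1)) \<le> length (r0[i := x])" using 1 \<open>length r1 \<le> i\<close> i by simp
      fix j assume "j < length (fst (row_insert ?y r1))"
      then show "r0[i := x] ! j < fst (row_insert ?y r1) ! j"
        using 1 below col \<open>length r1 \<le> i\<close> by (cases "j = length r1") (auto simp: nth_append)
    qed
  next
    case (2 i')
    have "i' \<le> i"
    proof (rule ccontr)
      assume "\<not> i' \<le> i"
      then have "r1 ! i < ?y" "?y < r1 ! i" using 2 col[of i] by auto
      then show False by simp
    qed
    show ?thesis unfolding fits_below_def
    proof (intro conjI allI impI)
      show "length (fst (row_insert ?y r1)) \<le> length (r0[i := x])" using 2 len by simp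
      fix j assume "j < length (fst (row_insert ?y r1))"
      then show "r0[i := x] ! j < fst (row_insert ?y r1) ! j"
        using 2 below[of i'] \<open>i' \<le> i\<close> xi col[of j] i by (cases "j = i'"; cases "j = i") auto
    qed
  qed
qed

lemma is_tableau_tab_insert:
  assumes "is_tableau T" "distinct (x # concat T)"
  shows "is_tableau (tab_insert x T)"
  using assms
proof (induction T arbitrary: x)
  case (Cons r rs)
  have sr: "sorted_wrt (<) r" "r \<noteq> []" using is_tableau_rows[OF Cons.prems(1)] by auto
  have xr: "x \<notin> set r" using Cons.prems by auto
  show ?case
  proof (cases rule: row_insert_cases_nth[OF sr(1) xr])
    case 1
    then have sx: "sorted_wrt (<) (r @ [x])" using sr by (auto simp: sorted_wrt_append)
    show ?thesis
    proof (cases rs)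
      case (Cons r2 rs2)
      then have "fits_below (r @ [x]) r2" using Cons.prems(1) by (auto simp: fits_below_def nth_append)
      then show ?thesis using 1 sx Cons Cons.prems(1) by simp
    qed (use 1 sx in simp)
  next
    case (2 i)
    let ?y = "r ! i"
    have ins: "tab_insert x (r # rs) = r[i := x] # tab_insert ?y rs" using 2 by simp
    have sx: "sorted_wrt (<) (r[i := x])" using row_insert_sorted[OF sr(1) xr] 2 by simp
    have "distinct (?y # concat rs)" using Cons.prems(2) 2(1) by (auto dest: nth_mem)
    then have IH: "is_tableau (tab_insert ?y rs)" using Cons.IH is_tableau_Cons Cons.prems(1) by blast
    show ?thesis
    proof (cases rs)
      case Nil
      have "r[i := x] ! 0 < ?y"
        using 2 sr(1) by (cases "i = 0") (auto simp: sorted_wrt_iff_nth_less)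
      then have "fits_below (r[i := x]) [?y]" using 2 by (auto simp: fits_below_def)
      then show ?thesis using ins sx Nil sr by simp
    next
      case (Cons r2 rs2)
      have fits: "fits_below r r2" and t2: "is_tableau (r2 # rs2)" using Cons.prems(1) Cons by auto
      have "?y \<notin> set r2" using \<open>distinct (?y # concat rs)\<close> Cons by auto
      then have "fits_below (r[i := x]) (fst (row_insert ?y r2))"
        using fits_below_row_insert[OF sr(1) 2(1,3,4) fits] is_tableau_rows[OF t2] by simp
      moreover obtain ts where "tab_insert ?y (r2 # rs2) = fst (row_insert ?y r2) # ts"
      proof (cases "row_insert ?y r2")
        case (Pair r' b)
        then show ?thesis using that by (cases b) auto
      qed
      ultimately show ?thesis using ins sx IH Cons sr by simp
    qed
  qed
qed simp

lemma is_tableau_rsk_P: "distinct w \<Longrightarrow> is_tableau (rsk_P w)"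
proof (induction w rule: rev_induct)
  case (snoc x w)
  then show ?case using is_tableau_tab_insert[of "rsk_P w" x] distinct_rsk_P set_rsk_P by auto
qed (simp add: rsk_P_def)

definition reading_word :: "nat list list \<Rightarrow> nat list" where
  "reading_word T = concat (rev T)"

lemma reading_word_Nil [simp]: "reading_word [] = []"
  by (simp add: reading_word_def)

lemma reading_word_Cons [simp]: "reading_word (r # rs) = reading_word rs @ r"
  by (simp add: reading_word_def)

lemma knuth_equiv_shift_left:
  assumes "sorted_wrt (<) (y # R)" "x < y"
  shows "equivclp knuth_step (y # R @ [x] @ s) (y # x # R @ s)"
  using assms
proof (induction R arbitrary: s rule: rev_induct)
  case (snoc z R)
  obtain q w where qw: "y # R = q @ [w]" by (metis append_butlast_last_id list.distinct(1))
  have "w \<in> set (y # R)" using qw by (metis in_set_conv_decomp)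
  then have "w < z" "x < w" using snoc.prems by (auto simp: sorted_wrt_append)
  then have "knuth_step (q @ [w, z, x] @ s) (q @ [w, x, z] @ s)" using knuth_step.knuth_yzx by blast
  then have "equivclp knuth_step (y # (R @ [z]) @ [x] @ s) (y # R @ [x] @ (z # s))"
    using qw by (metis append.assoc append_Cons append_Nil r_into_equivclp)
  moreover have "equivclp knuth_step (y # R @ [x] @ (z # s)) (y # x # R @ (z # s))"
    using snoc by (simp add: sorted_wrt_append)
  ultimately show ?case by (simp add: equivclp_trans)
qed simp

lemma knuth_equiv_shift_right:
  assumes "sorted_wrt (<) R" "\<forall>t\<in>set R. t < m" "m < y"
  shows "equivclp knuth_step (R @ [y, m] @ s) (y # R @ [m] @ s)"
  using assms
proof (induction R arbitrary: m s rule: rev_induct)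
  case (snoc t R)
  have "t < m" using snoc.prems by auto
  then have "knuth_step (R @ [t, y, m] @ s) (R @ [y, t, m] @ s)"
    using knuth_step.knuth_xzy snoc.prems by blast
  then have "equivclp knuth_step ((R @ [t]) @ [y, m] @ s) (R @ [y, t] @ (m # s))" by auto
  moreover have "equivclp knuth_step (R @ [y, t] @ (m # s)) (y # R @ [t] @ (m # s))"
    using snoc.IH[of t "m # s"] snoc.prems \<open>t < m\<close> by (auto simp: sorted_wrt_append)
  ultimately show ?case by (simp add: equivclp_trans)
qed simp

text \<open>A bumping insertion into one row is realised by Knuth moves: the new letter travels left
  to the bumped entry, which then travels to the front.\<close>
lemma row_insert_knuth_equiv:
  assumes "sorted_wrt (<) r" "x \<notin> set r" "row_insert x r = (r', Some y)"
  shows "equivclp knuth_step (r @ [x]) (y # r')"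
proof (cases rule: row_insert_cases[OF assms(1,2)])
  case (2 R1 y' R2)
  then have r: "r = R1 @ y # R2" and R1: "\<forall>z\<in>set R1. z < x" and xy: "x < y" and r': "r' = R1 @ x # R2"
    using assms(3) by auto
  have s: "sorted_wrt (<) (y # R2)" "sorted_wrt (<) R1" using assms(1) r by (auto simp: sorted_wrt_append)
  have "equivclp knuth_step (R1 @ (y # R2 @ [x] @ []) @ []) (R1 @ (y # x # R2 @ []) @ [])"
    using knuth_equiv_append[OF knuth_equiv_shift_left[OF s(1) xy]] by blast
  then have "equivclp knuth_step (r @ [x]) (R1 @ [y, x] @ R2)" using r by simp
  also have "equivclp knuth_step (R1 @ [y, x] @ R2) (y # R1 @ [x] @ R2)"
    using knuth_equiv_shift_right[OF s(2) R1 xy] .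
  finally show ?thesis using r' by simp
qed (use assms in simp)

lemma tab_insert_knuth_equiv:
  assumes "\<forall>r\<in>set T. sorted_wrt (<) r" "distinct (x # concat T)"
  shows "equivclp knuth_step (reading_word T @ [x]) (reading_word (tab_insert x T))"
  using assms
proof (induction T arbitrary: x)
  case (Cons r rs)
  have sr: "sorted_wrt (<) r" "x \<notin> set r" using Cons.prems by auto
  show ?case
  proof (cases rule: row_insert_cases[OF sr])
    case 1
    then show ?thesis by simp
  next
    case (2 R1 y R2)
    then have "distinct (y # concat rs)" using Cons.prems(2) by auto
    then have IH: "equivclp knuth_step (reading_word rs @ [y]) (reading_word (tab_insert y rs))"
      using Cons by simp
    have "equivclp knuth_step (reading_word rs @ r @ [x]) (reading_word rs @ [y] @ R1 @ x # R2)"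
      using knuth_equiv_append[OF row_insert_knuth_equiv[OF sr 2(4)], of "reading_word rs" "[]"]
      by simp
    also have "equivclp knuth_step \<dots> (reading_word (tab_insert y rs) @ R1 @ x # R2)"
      using knuth_equiv_append[OF IH, of "[]" "R1 @ x # R2"] by simp
    finally show ?thesis using 2(4) by simp
  qed
qed simp

lemma knuth_equiv_reading_rsk_P:
  "distinct w \<Longrightarrow> equivclp knuth_step w (reading_word (rsk_P w))"
proof (induction w rule: rev_induct)
  case (snoc x w)
  then have "equivclp knuth_step (w @ [x]) (reading_word (rsk_P w) @ [x])"
    using knuth_equiv_append[of w _ "[]" "[x]"] by simp
  also have "equivclp knuth_step \<dots> (reading_word (rsk_P (w @ [x])))"
    using snoc.prems is_tableau_rows[OF is_tableau_rsk_P] distinct_rsk_P set_rsk_P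
    by (auto intro!: tab_insert_knuth_equiv)
  finally show ?case .
qed (simp add: rsk_P_def)

section \<open>Greene's invariants of a tableau reading word\<close>

lemma card_le_fibrewise:
  assumes "finite A" "finite B" "\<And>j. card {x\<in>A. g x = j} \<le> card {x\<in>B. g x = j}"
  shows "card A \<le> card B"
proof -
  let ?J = "g ` A \<union> g ` B"
  have "card A = (\<Sum>j\<in>?J. card {x\<in>A. g x = j})"
    using sum.group[OF assms(1), of ?J g "\<lambda>_. 1::nat"] assms(1,2) by simp
  also have "\<dots> \<le> (\<Sum>j\<in>?J. card {x\<in>B. g x = j})" by (intro sum_mono assms(3))
  also have "\<dots> = card B"
    using sum.group[OF assms(2), of ?J g "\<lambda>_. 1::nat"] assms(1,2) by simp
  finally show ?thesis .
qed

lemma downward_closed_eq_lessThan: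
  assumes "finite H" "\<And>i i'. i \<in> H \<Longrightarrow> i' < i \<Longrightarrow> i' \<in> H"
  shows "H = {..<card H}"
proof -
  have "H \<subseteq> {..<card H}"
  proof
    fix x assume "x \<in> H"
    then have "{..x} \<subseteq> H" using assms(2) by (auto simp: le_less)
    then have "card {..x} \<le> card H" using assms(1) by (rule card_mono[rotated])
    then show "x \<in> {..<card H}" by simp
  qed
  then show ?thesis using card_subset_eq[OF _ \<open>H \<subseteq> {..<card H}\<close>] by simp
qed

text \<open>The colours of a k-increasing set separate the letters of any decreasing subsequence.\<close>
lemma card_le_of_decreasing:
  assumes S: "k_increasing w k S" and d: "distinct w" and A: "A \<subseteq> S"
    and dec: "\<And>x y. x \<in> A \<Longrightarrow> y \<in> A \<Longrightarrow> x < y \<Longrightarrow> precedes w y x"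
  shows "card A \<le> k"
proof -
  obtain col where col: "increasing_colouring w k S col" using S unfolding k_increasing_def by blast
  note C = increasing_colouringD[OF col]
  have "inj_on col A"
  proof (rule inj_onI)
    fix x y assume "x \<in> A" "y \<in> A" "col x = col y"
    then show "x = y"
      using C(3) dec A precedes_asym[OF d] by (metis linorder_neqE_nat subsetD)
  qed
  moreover have "col ` A \<subseteq> {..<k}" using C(2) A by auto
  ultimately show ?thesis using card_inj_on_le[of col A "{..<k}"] by simp
qed

definition cells :: "nat list list \<Rightarrow> (nat \<times> nat) set" where
  "cells T = (SIGMA i:{..<length T}. {..<length (T ! i)})"

definition entry :: "nat list list \<Rightarrow> nat \<times> nat \<Rightarrow> nat" where
  "entry T c = T ! fst c ! snd c"

lemma finite_cells [simp]: "finite (cells T)"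
  by (simp add: cells_def)

lemma mem_cells: "c \<in> cells T \<longleftrightarrow> fst c < length T \<and> snd c < length (T ! fst c)"
  by (cases c) (simp add: cells_def)

lemma entry_image_cells: "entry T ` cells T = set (concat T)"
proof
  show "entry T ` cells T \<subseteq> set (concat T)"
    by (auto simp: cells_def entry_def) (metis nth_mem)
  show "set (concat T) \<subseteq> entry T ` cells T"
  proof
    fix z assume "z \<in> set (concat T)"
    then obtain i j where "i < length T" "j < length (T ! i)" "T ! i ! j = z"
      by (auto simp: in_set_conv_nth)
    then show "z \<in> entry T ` cells T" unfolding cells_def entry_def by force
  qed
qed

lemma concat_split:
  "i < length T \<Longrightarrow> concat T = concat (take i T) @ T ! i @ concat (drop (Suc i) T)"
  by (metis append_take_drop_id concat_append Cons_nth_drop_Suc[symmetric] concat.simps(2))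

lemma disjoint_rows:
  assumes "distinct (concat T)" "i < i'" "i' < length T"
  shows "set (T ! i) \<inter> set (T ! i') = {}"
proof -
  have "distinct (concat (take i' T) @ T ! i' @ concat (drop (Suc i') T))"
    using concat_split[of i' T] assms by simp
  then have "set (concat (take i' T)) \<inter> set (T ! i') = {}" by auto
  moreover have "T ! i \<in> set (take i' T)" using assms by (auto simp: in_set_conv_nth)
  ultimately show ?thesis by auto
qed

lemma inj_on_entry:
  assumes d: "distinct (concat T)"
  shows "inj_on (entry T) (cells T)"
proof (rule inj_onI)
  fix c c' assume c: "c \<in> cells T" "c' \<in> cells T" and e: "entry T c = entry T c'"
  obtain i j i' j' where cc: "c = (i, j)" "c' = (i', j')" by fastforce
  have ij: "i < length T" "j < length (T ! i)" "i' < length T" "j' < length (T ! i')"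
    using c cc by (auto simp: cells_def)
  have "i = i'"
  proof (rule ccontr)
    assume "i \<noteq> i'"
    have "T ! i ! j \<in> set (T ! i)" "T ! i' ! j' \<in> set (T ! i')" using ij by simp_all
    moreover have "T ! i ! j = T ! i' ! j'" using e cc by (simp add: entry_def)
    ultimately have common: "T ! i ! j \<in> set (T ! i) \<inter> set (T ! i')" by (metis IntI)
    consider "i < i'" | "i' < i" using \<open>i \<noteq> i'\<close> by arith
    then show False
    proof cases
      case 1
      then show False using disjoint_rows[OF d 1 ij(3)] common by blast
    next
      case 2
      then show False using disjoint_rows[OF d 2 ij(1)] common by blast
    qed
  qed
  moreover have "distinct (T ! i)" using d ij by (simp add: distinct_concat_iff)
  ultimately show "c = c'" using e cc ij by (simp add: entry_def nth_eq_iff_index_eq)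
qed

lemma reading_word_split:
  "i < length T \<Longrightarrow>
    reading_word T = concat (rev (drop (Suc i) T)) @ T ! i @ concat (rev (take i T))"
  unfolding reading_word_def
  by (metis append_take_drop_id rev_append concat_append Cons_nth_drop_Suc[symmetric] rev.simps(2)
      concat.simps(2) append.assoc concat_append append_Nil2 concat.simps(1))

lemma precedes_reading_row:
  "i < length T \<Longrightarrow> j < j' \<Longrightarrow> j' < length (T ! i) \<Longrightarrow>
    precedes (reading_word T) (T ! i ! j) (T ! i ! j')"
  using reading_word_split[of i T] precedes_nth[of j j' "T ! i"] by simp

lemma precedes_reading_column:
  assumes "i < i'" "i' < length T" "j < length (T ! i')" "j < length (T ! i)"
  shows "precedes (reading_word T) (T ! i' ! j) (T ! i ! j)"
proof -
  have "T ! i' = drop (Suc i) T ! (i' - Suc i)" "i' - Suc i < length (drop (Suc i) T)"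
    using assms by auto
  then have "T ! i' \<in> set (drop (Suc i) T)" by (metis nth_mem)
  then have "T ! i' ! j \<in> set (concat (rev (drop (Suc i) T)))"
    using assms(3) by (auto intro!: bexI[of _ "T ! i'"])
  then show ?thesis using reading_word_split[of i T] assms by simp
qed

lemma is_tableau_row_less:
  "is_tableau T \<Longrightarrow> i < length T \<Longrightarrow> j < j' \<Longrightarrow> j' < length (T ! i) \<Longrightarrow> T ! i ! j < T ! i ! j'"
  using is_tableau_rows[of T "T ! i"] by (auto simp: sorted_wrt_iff_nth_less)

lemma is_tableau_column_less:
  "is_tableau T \<Longrightarrow> i < i' \<Longrightarrow> i' < length T \<Longrightarrow> j < length (T ! i') \<Longrightarrow>
    T ! i ! j < T ! i' ! j \<and> length (T ! i') \<le> length (T ! i)"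
  using is_tableau_fits_below[of T i i'] by (auto simp: fits_below_def)

lemma card_cells_first_rows: "card {c\<in>cells T. fst c < k} = (\<Sum>i<k. part (map length T) i)"
proof -
  have "{c\<in>cells T. fst c < k} = (SIGMA i:{..<k} \<inter> {..<length T}. {..<length (T ! i)})"
    by (auto simp: cells_def)
  then have "card {c\<in>cells T. fst c < k} = (\<Sum>i\<in>{..<k} \<inter> {..<length T}. length (T ! i))"
    by simp
  also have "\<dots> = (\<Sum>i<k. part (map length T) i)"
    by (rule sum.mono_neutral_cong_left) (auto simp: part_def split: if_splits)
  finally show ?thesis .
qed

lemma card_cells_first_columns:
  "card {c\<in>cells T. snd c < k} = (\<Sum>i<length T. min (length (T ! i)) k)"
proof -
  have "{c\<in>cells T. snd c < k} = (SIGMA i:{..<length T}. {..<min (length (T ! i)) k})"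
    by (auto simp: cells_def)
  then show ?thesis by simp
qed

lemma set_reading_word [simp]: "set (reading_word T) = set (concat T)"
  by (auto simp: reading_word_def)

lemma distinct_reading_word [simp]: "distinct (reading_word T) \<longleftrightarrow> distinct (concat T)"
  by (simp add: reading_word_def)

lemma card_entry_image:
  "distinct (concat T) \<Longrightarrow> C \<subseteq> cells T \<Longrightarrow> card (entry T ` C) = card C"
  by (meson card_image inj_on_entry inj_on_subset)

lemma inv_into_entry:
  "distinct (concat T) \<Longrightarrow> c \<in> cells T \<Longrightarrow> inv_into (cells T) (entry T) (entry T c) = c"
  by (simp add: inj_on_entry inv_into_f_f)

lemma greene_reading_word_ge:
  assumes t: "is_tableau T" and d: "distinct (concat T)"
  shows "card {c\<in>cells T. fst c < k} \<le> greene (reading_word T) k"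
proof -
  let ?D = "{c\<in>cells T. fst c < k}"
  have "increasing_colouring (reading_word T) k (entry T ` ?D) (fst \<circ> inv_into (cells T) (entry T))"
  proof (rule increasing_colouringI)
    show "entry T ` ?D \<subseteq> set (reading_word T)" using entry_image_cells[of T] by auto
    show "(fst \<circ> inv_into (cells T) (entry T)) z < k" if "z \<in> entry T ` ?D" for z
      using that inv_into_entry[OF d] by auto
    fix z z' assume "z \<in> entry T ` ?D" "z' \<in> entry T ` ?D" and zz': "z < z'"
      and same: "(fst \<circ> inv_into (cells T) (entry T)) z = (fst \<circ> inv_into (cells T) (entry T)) z'"
    then obtain i j j' where c: "(i, j) \<in> cells T" "(i, j') \<in> cells T"
      and z: "z = T ! i ! j" "z' = T ! i ! j'"
      using inv_into_entry[OF d] by (force simp: entry_def)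
    have "j < j'"
    proof (rule ccontr)
      assume "\<not> j < j'"
      then have "z' \<le> z"
        using is_tableau_row_less[OF t, of i j' j] c z by (cases "j = j'") (auto simp: mem_cells)
      then show False using zz' by simp
    qed
    then show "precedes (reading_word T) z z'" using precedes_reading_row c z by (simp add: mem_cells)
  qed
  then show ?thesis
    using card_le_greene card_entry_image[OF d, of ?D] unfolding k_increasing_def by fastforce
qed

lemma greene_rev_reading_word_ge:
  assumes t: "is_tableau T" and d: "distinct (concat T)"
  shows "card {c\<in>cells T. snd c < k} \<le> greene (rev (reading_word T)) k"
proof -
  let ?D = "{c\<in>cells T. snd c < k}"
  have "increasing_colouring (rev (reading_word T)) k (entry T ` ?D) (snd \<circ> inv_into (cells T) (entry T))"
  proof (rule increasing_colouringI)
    show "entry T ` ?D \<subseteq> set (rev (reading_word T))" using entry_image_cells[of T] by auto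
    show "(snd \<circ> inv_into (cells T) (entry T)) z < k" if "z \<in> entry T ` ?D" for z
      using that inv_into_entry[OF d] by auto
    fix z z' assume "z \<in> entry T ` ?D" "z' \<in> entry T ` ?D" and zz': "z < z'"
      and same: "(snd \<circ> inv_into (cells T) (entry T)) z = (snd \<circ> inv_into (cells T) (entry T)) z'"
    then obtain i i' j where c: "(i, j) \<in> cells T" "(i', j) \<in> cells T"
      and z: "z = T ! i ! j" "z' = T ! i' ! j"
      using inv_into_entry[OF d] by (force simp: entry_def)
    have "i < i'"
    proof (rule ccontr)
      assume "\<not> i < i'"
      then have "z' \<le> z"
        using is_tableau_column_less[OF t, of i' i j] c z by (cases "i = i'") (auto simp: mem_cells)
      then show False using zz' by simp
    qed
    then show "precedes (rev (reading_word T)) z z'"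
      using precedes_reading_column c z by (simp add: mem_cells)
  qed
  then show ?thesis
    using card_le_greene card_entry_image[OF d, of ?D] unfolding k_increasing_def by fastforce
qed

lemma card_entry_preimage:
  assumes "S \<subseteq> set (concat T)" "distinct (concat T)"
  shows "card {c\<in>cells T. entry T c \<in> S} = card S"
proof -
  have "S = entry T ` {c\<in>cells T. entry T c \<in> S}" using assms(1) entry_image_cells[of T] by auto
  then show ?thesis using card_entry_image[OF assms(2), of "{c\<in>cells T. entry T c \<in> S}"] by auto
qed

text \<open>Column j of a k-increasing subset of the reading word has at most k cells, so it fits
  into the first k rows of that column.\<close>
lemma greene_reading_word_le:
  assumes t: "is_tableau T" and d: "distinct (concat T)" and S: "k_increasing (reading_word T) k S"
  shows "card S \<le> card {c\<in>cells T. fst c < k}"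
proof -
  let ?C = "{c\<in>cells T. entry T c \<in> S}"
  have "card ?C \<le> card {c\<in>cells T. fst c < k}"
  proof (rule card_le_fibrewise[where g = snd])
    fix j
    let ?Cj = "{c\<in>?C. snd c = j}"
    define H where "H = {i. i < length T \<and> j < length (T ! i)}"
    have "H = {..<card H}"
    proof (rule downward_closed_eq_lessThan)
      show "finite H" by (simp add: H_def)
      show "i' \<in> H" if "i \<in> H" "i' < i" for i i'
        using that is_tableau_column_less[OF t, of i' i j] by (auto simp: H_def)
    qed
    then obtain h where h: "H = {..<h}" by blast
    then have "i < length T \<and> j < length (T ! i) \<longleftrightarrow> i < h" for i
      unfolding H_def set_eq_iff by simp
    then have "{c\<in>{c\<in>cells T. fst c < k}. snd c = j} = (\<lambda>i. (i, j)) ` {..<min h k}"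
      by (force simp: mem_cells)
    then have B: "card {c\<in>{c\<in>cells T. fst c < k}. snd c = j} = min (card H) k"
      using h by (simp add: card_image inj_on_def)
    have "card ?Cj \<le> card H"
      by (rule card_inj_on_le[where f = fst]) (auto simp: H_def mem_cells inj_on_def)
    moreover have "card (entry T ` ?Cj) \<le> k"
    proof (rule card_le_of_decreasing[OF S])
      show "distinct (reading_word T)" using d by simp
      show "entry T ` ?Cj \<subseteq> S" by auto
      fix x y assume "x \<in> entry T ` ?Cj" "y \<in> entry T ` ?Cj" "x < y"
      then obtain i i' where c: "(i, j) \<in> cells T" "(i', j) \<in> cells T" "x = T ! i ! j" "y = T ! i' ! j"
        by (auto simp: entry_def)
      have "i < i'"
      proof (rule ccontr)
        assume "\<not> i < i'"
        then have "y \<le> x"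
          using is_tableau_column_less[OF t, of i' i j] c by (cases "i = i'") (auto simp: mem_cells)
        then show False using \<open>x < y\<close> by simp
      qed
      then show "precedes (reading_word T) y x" using precedes_reading_column c by (simp add: mem_cells)
    qed
    then have "card ?Cj \<le> k" using card_entry_image[OF d, of ?Cj] by simp
    ultimately show "card ?Cj \<le> card {c\<in>{c\<in>cells T. fst c < k}. snd c = j}" using B by simp
  qed auto
  then show ?thesis using card_entry_preimage[OF _ d, of S] k_increasing_subset[OF S] by simp
qed

lemma greene_rev_reading_word_le:
  assumes t: "is_tableau T" and d: "distinct (concat T)" and S: "k_increasing (rev (reading_word T)) k S"
  shows "card S \<le> card {c\<in>cells T. snd c < k}"
proof -
  let ?C = "{c\<in>cells T. entry T c \<in> S}"
  have "card ?C \<le> card {c\<in>cells T. snd c < k}"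
  proof (rule card_le_fibrewise[where g = fst])
    fix i
    let ?Ci = "{c\<in>?C. fst c = i}"
    show "card ?Ci \<le> card {c\<in>{c\<in>cells T. snd c < k}. fst c = i}"
    proof (cases "i < length T")
      case True
      then have "{c\<in>{c\<in>cells T. snd c < k}. fst c = i} = (\<lambda>j. (i, j)) ` {..<min (length (T ! i)) k}"
        by (auto simp: mem_cells)
      then have B: "card {c\<in>{c\<in>cells T. snd c < k}. fst c = i} = min (length (T ! i)) k"
        by (simp add: card_image inj_on_def)
      have "card ?Ci \<le> card {..<length (T ! i)}"
        by (rule card_inj_on_le[where f = snd]) (auto simp: mem_cells inj_on_def)
      moreover have "card (entry T ` ?Ci) \<le> k"
      proof (rule card_le_of_decreasing[OF S])
        show "distinct (rev (reading_word T))" using d by simp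
        show "entry T ` ?Ci \<subseteq> S" by auto
        fix x y assume "x \<in> entry T ` ?Ci" "y \<in> entry T ` ?Ci" "x < y"
        then obtain j j' where c: "(i, j) \<in> cells T" "(i, j') \<in> cells T" "x = T ! i ! j" "y = T ! i ! j'"
          by (auto simp: entry_def)
        have "j < j'"
        proof (rule ccontr)
          assume "\<not> j < j'"
          then have "y \<le> x"
            using is_tableau_row_less[OF t, of i j' j] c by (cases "j = j'") (auto simp: mem_cells)
          then show False using \<open>x < y\<close> by simp
        qed
        then show "precedes (rev (reading_word T)) y x" using precedes_reading_row c by (simp add: mem_cells)
      qed
      then have "card ?Ci \<le> k" using card_entry_image[OF d, of ?Ci] by simp
      ultimately show ?thesis using B by simp
    next
      case False
      then have "?Ci = {}" by (auto simp: mem_cells)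
      then show ?thesis by (simp only: card.empty le0)
    qed
  qed auto
  then show ?thesis using card_entry_preimage[OF _ d, of S] k_increasing_subset[OF S] by simp
qed

theorem greene_reading_word:
  "is_tableau T \<Longrightarrow> distinct (concat T) \<Longrightarrow> greene (reading_word T) k = (\<Sum>i<k. part (map length T) i)"
  using greene_reading_word_ge[of T k] greene_reading_word_le[of T k] greene_attained[of "reading_word T" k]
  by (metis card_cells_first_rows le_antisym)

theorem greene_rev_reading_word:
  "is_tableau T \<Longrightarrow> distinct (concat T) \<Longrightarrow>
    greene (rev (reading_word T)) k = (\<Sum>i<length T. min (length (T ! i)) k)"
  using greene_rev_reading_word_ge[of T k] greene_rev_reading_word_le[of T k]
    greene_attained[of "rev (reading_word T)" k]
  by (metis card_cells_first_columns le_antisym)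

section \<open>Greene's theorem and adjacent transpositions\<close>

lemma length_le_length_concat: "is_tableau T \<Longrightarrow> length T \<le> length (concat T)"
proof (induction T)
  case (Cons r rs)
  then show ?case using is_tableau_rows[OF Cons.prems] is_tableau_Cons[OF Cons.prems]
    by (cases r) auto
qed simp

theorem greene_rsk_shape:
  assumes "distinct w"
  shows "greene w k = (\<Sum>i<k. part (rsk_shape w) i)"
proof -
  have "greene w k = greene (reading_word (rsk_P w)) k"
    using greene_knuth_equiv knuth_equiv_reading_rsk_P assms by blast
  then show ?thesis
    using greene_reading_word is_tableau_rsk_P assms distinct_rsk_P by (simp add: rsk_shape_def)
qed

theorem greene_rev_rsk_shape:
  assumes "distinct w" "length w \<le> N"
  shows "greene (rev w) k = (\<Sum>i<N. min (part (rsk_shape w) i) k)"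
proof -
  let ?T = "rsk_P w"
  have t: "is_tableau ?T" and d: "distinct (concat ?T)"
    using assms(1) is_tableau_rsk_P distinct_rsk_P by auto
  have "length ?T \<le> N"
    using length_le_length_concat[OF t] length_rsk_P[of w] assms(2) by simp
  have "greene (rev w) k = greene (rev (reading_word ?T)) k"
    using greene_knuth_equiv knuth_equiv_rev[OF knuth_equiv_reading_rsk_P] assms(1)
    by (metis distinct_rev)
  also have "\<dots> = (\<Sum>i<length ?T. min (length (?T ! i)) k)"
    using greene_rev_reading_word[OF t d] .
  also have "\<dots> = (\<Sum>i<N. min (part (rsk_shape w) i) k)"
    using \<open>length ?T \<le> N\<close>
    by (intro sum.mono_neutral_cong_left) (auto simp: part_def rsk_shape_def)
  finally show ?thesis .
qed

lemma greene_le_length: "greene w k \<le> length w"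
proof -
  obtain S where "k_increasing w k S" "card S = greene w k" by (rule greene_attained)
  then show ?thesis
    by (metis card_length card_mono finite_set k_increasing_subset order_trans)
qed

lemma rsk_shape_antimono: "distinct w \<Longrightarrow> part (rsk_shape w) (Suc i) \<le> part (rsk_shape w) i"
  using is_tableau_fits_below[OF is_tableau_rsk_P, of w i "Suc i"]
  by (auto simp: part_def rsk_shape_def fits_below_def)

lemma sum_rsk_shape_le: "distinct w \<Longrightarrow> (\<Sum>i<k. part (rsk_shape w) i) \<le> length w"
  using greene_rsk_shape greene_le_length by metis

lemma adj_swap_adj_swap [simp]: "adj_swap k (adj_swap k x) = x"
  by (simp add: adj_swap_def)

lemma inj_adj_swap: "inj (adj_swap k)"
  by (metis adj_swap_adj_swap injI)

lemma adj_swap_less: "x < y \<Longrightarrow> \<not> (x = k \<and> y = Suc k) \<Longrightarrow> adj_swap k x < adj_swap k y"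
  by (auto simp: adj_swap_def)

text \<open>Relabelling by the transposition (k, k+1) only affects the relative order of k and k + 1.\<close>
lemma k_increasing_unswap:
  assumes before: "precedes v k (Suc k)" and S: "k_increasing (map (adj_swap k) v) j S"
  shows "k_increasing v j (adj_swap k ` S)"
proof -
  let ?s = "adj_swap k"
  obtain col where col: "increasing_colouring (map ?s v) j S col"
    using S unfolding k_increasing_def by blast
  note C = increasing_colouringD[OF col]
  have "increasing_colouring v j (?s ` S) (col \<circ> ?s)"
  proof (rule increasing_colouringI)
    show "?s ` S \<subseteq> set v" using C(1) by auto
    show "x \<in> ?s ` S \<Longrightarrow> (col \<circ> ?s) x < j" for x using C(2) by auto
    fix x y assume "x \<in> ?s ` S" "y \<in> ?s ` S" "x < y" "(col \<circ> ?s) x = (col \<circ> ?s) y"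
    then show "precedes v x y"
      using before C(3)[of "?s x" "?s y"] adj_swap_less[of x y k] precedes_map_inj[OF inj_adj_swap]
      by (cases "x = k \<and> y = Suc k") auto
  qed
  then show ?thesis unfolding k_increasing_def by blast
qed

lemma k_increasing_swap_remove:
  assumes S: "k_increasing v j S"
  shows "k_increasing (map (adj_swap k) v) j (adj_swap k ` (S - {k}))"
proof -
  let ?s = "adj_swap k"
  obtain col where col: "increasing_colouring v j S col"
    using S unfolding k_increasing_def by blast
  note C = increasing_colouringD[OF col]
  have "increasing_colouring (map ?s v) j (?s ` (S - {k})) (col \<circ> ?s)"
  proof (rule increasing_colouringI)
    show "?s ` (S - {k}) \<subseteq> set (map ?s v)" using C(1) by auto
    show "x \<in> ?s ` (S - {k}) \<Longrightarrow> (col \<circ> ?s) x < j" for x using C(2) by auto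
    fix x y assume "x \<in> ?s ` (S - {k})" "y \<in> ?s ` (S - {k})" "x < y" "(col \<circ> ?s) x = (col \<circ> ?s) y"
    moreover have "\<not> (x = k \<and> y = Suc k)" using \<open>y \<in> ?s ` (S - {k})\<close> by (auto simp: adj_swap_def)
    ultimately have "precedes v (?s x) (?s y)" using C(3) adj_swap_less[of x y k] by auto
    then show "precedes (map ?s v) x y" using precedes_map[of v "?s x" "?s y" ?s] by simp
  qed
  then show ?thesis unfolding k_increasing_def by blast
qed

theorem greene_adj_swap:
  assumes "precedes v k (Suc k)"
  shows "greene (map (adj_swap k) v) j \<le> greene v j"
    and "greene v j \<le> greene (map (adj_swap k) v) j + 1"
proof -
  have card_swap: "card (adj_swap k ` A) = card A" for A
    using card_image[OF inj_on_subset[OF inj_adj_swap]] by blast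
  show "greene (map (adj_swap k) v) j \<le> greene v j"
    using k_increasing_unswap[OF assms] card_swap by (intro greene_le_greene) (metis order_refl)
  obtain S where S: "k_increasing v j S" "card S = greene v j" by (rule greene_attained)
  have "card S \<le> card (S - {k}) + 1" by (simp add: card_Diff_singleton_if) arith
  also have "\<dots> \<le> greene (map (adj_swap k) v) j + 1"
    using card_le_greene[OF k_increasing_swap_remove[OF S(1), of k]] card_swap[of "S - {k}"] by simp
  finally show "greene v j \<le> greene (map (adj_swap k) v) j + 1" using S(2) by simp
qed

section \<open>Partitions that are close in rows and columns\<close>

lemma sum_ge_triangle:
  assumes "finite V" "0 \<notin> V"
  shows "card V * (card V + 1) \<le> 2 * \<Sum>(V :: nat set)"
  using assms
proof (induction "card V" arbitrary: V)
  case (Suc N)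
  define M where "M = Max V"
  have "V \<noteq> {}" using Suc.hyps(2) by auto
  then have "M \<in> V" using Suc.prems(1) by (simp add: M_def)
  have "card (V - {M}) = N" using Suc.hyps(2) \<open>M \<in> V\<close> by simp
  then have "N * (N + 1) \<le> 2 * \<Sum>(V - {M})"
    using Suc.hyps(1)[of "V - {M}"] Suc.prems by simp
  moreover have "card V \<le> M"
  proof -
    have "V \<subseteq> {1..M}"
    proof
      fix x assume "x \<in> V"
      have "x \<le> M" using Suc.prems(1) \<open>x \<in> V\<close> by (simp add: M_def)
      moreover have "x \<noteq> 0" using Suc.prems(2) \<open>x \<in> V\<close> by metis
      ultimately show "x \<in> {1..M}" by simp
    qed
    then show ?thesis using card_mono[of "{1..M}" V] by simp
  qed
  moreover have "\<Sum>V = M + \<Sum>(V - {M})" using sum.remove[OF Suc.prems(1) \<open>M \<in> V\<close>] by simp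
  ultimately show ?case unfolding Suc.hyps(2)[symmetric] by (simp add: algebra_simps)
qed simp

text \<open>For a partition a, conjugate n a v is its conjugate part a'_v (for 1 \<le> v), counted
  among the first n parts.\<close>
definition conjugate :: "nat \<Rightarrow> (nat \<Rightarrow> nat) \<Rightarrow> nat \<Rightarrow> nat" where
  "conjugate n a v = card {i. i < n \<and> v \<le> a i}"

lemma sum_min_Suc:
  "(\<Sum>i<n. min (a i) (Suc c)) = (\<Sum>i<n. min (a i) c) + conjugate n a (Suc c)"
proof -
  have "(\<Sum>i<n. min (a i) (Suc c)) = (\<Sum>i<n. min (a i) c + (if Suc c \<le> a i then 1 else 0))"
    by (rule sum.cong) auto
  also have "\<dots> = (\<Sum>i<n. min (a i) c) + card ({..<n} \<inter> {i. Suc c \<le> a i})"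
    by (simp add: sum.distrib sum.If_cases)
  also have "{..<n} \<inter> {i. Suc c \<le> a i} = {i. i < n \<and> Suc c \<le> a i}" by auto
  finally show ?thesis by (simp add: conjugate_def)
qed

text \<open>If b i < v \<le> a i, then the conjugate part of a at v exceeds i while that of b is at
  most i; closeness of the conjugates pins both down.\<close>
lemma conjugate_at_gap:
  assumes a: "decseq a" and b: "decseq b" and i: "i < n" "b i < v" "v \<le> a i"
    and close: "conjugate n a v \<le> conjugate n b v + 1"
  shows "conjugate n b v = i" "conjugate n a v = Suc i"
proof -
  have "{..i} \<subseteq> {l. l < n \<and> v \<le> a l}" using i decseqD[OF a] by (auto intro: order_trans)
  then have "card {..i} \<le> conjugate n a v" unfolding conjugate_def by (intro card_mono) simp_all
  then have "Suc i \<le> conjugate n a v" by simp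
  moreover have "{l. l < n \<and> v \<le> b l} \<subseteq> {..<i}"
  proof
    fix l assume "l \<in> {l. l < n \<and> v \<le> b l}"
    then show "l \<in> {..<i}" using i decseqD[OF b, of i l] by (cases "i \<le> l") auto
  qed
  then have "conjugate n b v \<le> i" unfolding conjugate_def using card_mono[of "{..<i}"] by fastforce
  ultimately show "conjugate n b v = i" "conjugate n a v = Suc i" using close by simp_all
qed

lemma larger_parts_distinct:
  fixes a b :: "nat \<Rightarrow> nat"
  assumes a: "decseq a" and b: "decseq b"
    and conj: "\<And>v. conjugate n a v \<le> conjugate n b v + 1 \<and> conjugate n b v \<le> conjugate n a v + 1"
    and P: "P = {i. i < n \<and> a i = Suc (b i)}" and Q: "Q = {i. i < n \<and> b i = Suc (a i)}"
  shows "inj_on a P" "inj_on b Q" "a ` P \<inter> b ` Q = {}"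
proof -
  have P_index: "conjugate n b (a i) = i" "conjugate n a (a i) = Suc i" if "i \<in> P" for i
  proof -
    have "i < n" "b i < a i" using that by (auto simp: P)
    from conjugate_at_gap[OF a b this order_refl conj[THEN conjunct1]]
    show "conjugate n b (a i) = i" "conjugate n a (a i) = Suc i" by simp_all
  qed
  have Q_index: "conjugate n a (b i) = i" "conjugate n b (b i) = Suc i" if "i \<in> Q" for i
  proof -
    have "i < n" "a i < b i" using that by (auto simp: Q)
    from conjugate_at_gap[OF b a this order_refl conj[THEN conjunct2]]
    show "conjugate n a (b i) = i" "conjugate n b (b i) = Suc i" by simp_all
  qed
  show "inj_on a P" "inj_on b Q" by (metis P_index(1) inj_onI, metis Q_index(1) inj_onI)
  show "a ` P \<inter> b ` Q = {}"
  proof (rule ccontr)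
    assume "a ` P \<inter> b ` Q \<noteq> {}"
    then obtain i i' where "i \<in> P" "i' \<in> Q" "a i = b i'" by blast
    then show False using P_index[of i] Q_index[of i'] by simp
  qed
qed

theorem sum_abs_diff_squared_le:
  fixes a b :: "nat \<Rightarrow> nat"
  assumes a: "decseq a" and b: "decseq b"
    and sum_a: "(\<Sum>i<n. a i) \<le> n" and sum_b: "(\<Sum>i<n. b i) \<le> n"
    and parts: "\<And>i. a i \<le> b i + 1 \<and> b i \<le> a i + 1"
    and conj: "\<And>v. conjugate n a v \<le> conjugate n b v + 1 \<and> conjugate n b v \<le> conjugate n a v + 1"
  shows "(\<Sum>i<n. \<bar>real (a i) - real (b i)\<bar>)\<^sup>2 \<le> 2 * real n"
proof -
  define P where "P = {i. i < n \<and> a i = Suc (b i)}"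
  define Q where "Q = {i. i < n \<and> b i = Suc (a i)}"
  have fin: "finite P" "finite Q" and PQ: "P \<subseteq> {..<n}" "Q \<subseteq> {..<n}" "P \<inter> Q = {}"
    by (auto simp: P_def Q_def)
  note inj = larger_parts_distinct(1,2)[OF a b conj P_def Q_def]
    and disj = larger_parts_distinct(3)[OF a b conj P_def Q_def]
  define t where "t = card P + card Q"
  have "(\<Sum>i<n. \<bar>real (a i) - real (b i)\<bar>) = (\<Sum>i<n. (if i \<in> P then 1 else 0) + (if i \<in> Q then 1 else 0))"
  proof (intro sum.cong refl)
    fix i assume "i \<in> {..<n}"
    then show "\<bar>real (a i) - real (b i)\<bar> = (if i \<in> P then 1 else 0) + (if i \<in> Q then 1 else 0)"
      using parts[of i] by (auto simp: P_def Q_def)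
  qed
  also have "\<dots> = real t"
    using PQ by (simp add: sum.distrib sum.If_cases Int_absorb1 Int_absorb2 Int_commute t_def)
  finally have abs_sum: "(\<Sum>i<n. \<bar>real (a i) - real (b i)\<bar>) = real t" .
  let ?V = "a ` P \<union> b ` Q"
  have "card ?V = t" using card_Un_disjoint[OF _ _ disj] fin card_image[OF inj(1)] card_image[OF inj(2)]
    by (simp add: t_def)
  moreover have "0 \<notin> ?V" by (auto simp: P_def Q_def)
  ultimately have "t * (t + 1) \<le> 2 * \<Sum>?V" using sum_ge_triangle[of ?V] fin by simp
  also have "2 * \<Sum>?V = (\<Sum>i\<in>P. a i + b i) + (\<Sum>i\<in>Q. a i + b i) + t"
  proof -
    have "\<Sum>?V = (\<Sum>i\<in>P. a i) + (\<Sum>i\<in>Q. b i)"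
      using sum.union_disjoint[OF _ _ disj, of "\<lambda>x. x"] fin sum.reindex[OF inj(1), of "\<lambda>x. x"]
        sum.reindex[OF inj(2), of "\<lambda>x. x"] by simp
    moreover have "(\<Sum>i\<in>P. 2 * a i) = (\<Sum>i\<in>P. a i + b i + 1)" "(\<Sum>i\<in>Q. 2 * b i) = (\<Sum>i\<in>Q. a i + b i + 1)"
      by (auto simp: P_def Q_def intro!: sum.cong)
    ultimately show ?thesis by (simp add: sum.distrib sum_distrib_left sum_Suc t_def)
  qed
  also have "(\<Sum>i\<in>P. a i + b i) + (\<Sum>i\<in>Q. a i + b i) \<le> (\<Sum>i<n. a i + b i)"
  proof -
    have "(\<Sum>i\<in>P \<union> Q. a i + b i) \<le> (\<Sum>i<n. a i + b i)" using PQ by (intro sum_mono2) auto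
    then show ?thesis using sum.union_disjoint[OF fin PQ(3), of "\<lambda>i. a i + b i"] by simp
  qed
  finally have "t * t \<le> 2 * n" using sum_a sum_b by (simp add: sum.distrib algebra_simps)
  then have "real t ^ 2 \<le> 2 * real n" by (simp add: power2_eq_square flip: of_nat_mult)
  then show ?thesis using abs_sum by simp
qed

lemma parts_close_of_partial_sums:
  fixes a b :: "nat \<Rightarrow> nat"
  assumes "\<And>k. (\<Sum>i<k. b i) \<le> (\<Sum>i<k. a i) \<and> (\<Sum>i<k. a i) \<le> (\<Sum>i<k. b i) + 1"
  shows "a i \<le> b i + 1 \<and> b i \<le> a i + 1"
  using assms[of i] assms[of "Suc i"] by simp

lemma conjugate_close_of_min_sums:
  fixes a b :: "nat \<Rightarrow> nat"
  assumes "\<And>c. (\<Sum>i<n. min (a i) c) \<le> (\<Sum>i<n. min (b i) c) \<and>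
    (\<Sum>i<n. min (b i) c) \<le> (\<Sum>i<n. min (a i) c) + 1"
  shows "conjugate n a v \<le> conjugate n b v + 1 \<and> conjugate n b v \<le> conjugate n a v + 1"
proof (cases v)
  case 0
  then show ?thesis by (simp add: conjugate_def)
next
  case (Suc c)
  then show ?thesis unfolding Suc using assms[of c] assms[of "Suc c"] sum_min_Suc[where n = n and a = a and c = c] sum_min_Suc[where n = n and a = b and c = c]
    by linarith
qed

lemma Delta_adj_swap_le:
  assumes d: "distinct \<pi>" and len: "length \<pi> = n" and before: "precedes \<pi> k (Suc k)"
  shows "Delta n (rsk_shape \<pi>) (rsk_shape (map (adj_swap k) \<pi>)) \<le> sqrt (real n / 2)"
proof -
  let ?\<tau> = "map (adj_swap k) \<pi>"
  define a where "a = part (rsk_shape \<pi>)"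
  define b where "b = part (rsk_shape ?\<tau>)"
  have d\<tau>: "distinct ?\<tau>"
    using d inj_on_subset[OF inj_adj_swap[of k], of "set \<pi>"] by (simp add: distinct_map)
  have "(\<Sum>i<k'. b i) \<le> (\<Sum>i<k'. a i) \<and> (\<Sum>i<k'. a i) \<le> (\<Sum>i<k'. b i) + 1" for k'
    using greene_adj_swap[OF before, of k'] greene_rsk_shape[OF d] greene_rsk_shape[OF d\<tau>]
    unfolding a_def b_def by simp
  then have parts: "a i \<le> b i + 1 \<and> b i \<le> a i + 1" for i by (rule parts_close_of_partial_sums)
  have "precedes (rev ?\<tau>) k (Suc k)"
    using precedes_map_inj[OF inj_adj_swap, of k \<pi> k "Suc k"] before by (simp add: adj_swap_def)
  moreover have "map (adj_swap k) (rev ?\<tau>) = rev \<pi>" by (simp add: rev_map comp_def)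
  ultimately have "(\<Sum>i<n. min (a i) c) \<le> (\<Sum>i<n. min (b i) c) \<and>
      (\<Sum>i<n. min (b i) c) \<le> (\<Sum>i<n. min (a i) c) + 1" for c
    using greene_adj_swap[of "rev ?\<tau>" k c] greene_rev_rsk_shape[OF d, of n c]
      greene_rev_rsk_shape[OF d\<tau>, of n c] len
    unfolding a_def b_def by simp
  then have conj: "conjugate n a v \<le> conjugate n b v + 1 \<and> conjugate n b v \<le> conjugate n a v + 1" for v
    by (rule conjugate_close_of_min_sums)
  have "decseq a" "decseq b"
    using rsk_shape_antimono[OF d] rsk_shape_antimono[OF d\<tau>] by (auto simp: decseq_Suc_iff a_def b_def)
  moreover have "(\<Sum>i<n. a i) \<le> n" "(\<Sum>i<n. b i) \<le> n"
    using sum_rsk_shape_le[OF d] sum_rsk_shape_le[OF d\<tau>] len by (simp_all add: a_def b_def)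
  ultimately have "(\<Sum>i<n. \<bar>real (a i) - real (b i)\<bar>)\<^sup>2 \<le> 2 * real n"
    using sum_abs_diff_squared_le parts conj by blast
  moreover have "(\<Sum>i<n. \<bar>real (a i) - real (b i)\<bar>) = 2 * Delta n (rsk_shape \<pi>) (rsk_shape ?\<tau>)"
    unfolding Delta_def a_def b_def by simp
  ultimately have "(Delta n (rsk_shape \<pi>) (rsk_shape ?\<tau>))\<^sup>2 \<le> real n / 2"
    by (simp add: power_mult_distrib)
  then show ?thesis by (rule real_le_rsqrt)
qed

section \<open>Connectivity of adjacent transpositions\<close>

lemma sorted_wrt_of_precedes:
  "distinct p \<Longrightarrow> (\<And>x y. x \<in> set p \<Longrightarrow> y \<in> set p \<Longrightarrow> x < y \<Longrightarrow> precedes p x y) \<Longrightarrow>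
    sorted_wrt (<) p"
proof (induction p)
  case (Cons z p)
  have "z < y" if "y \<in> set p" for y
  proof (rule ccontr)
    assume "\<not> z < y"
    moreover have "y \<noteq> z" using Cons.prems(1) that by auto
    ultimately have "precedes (z # p) y z" using Cons.prems(2)[of y z] that by simp
    then show False using Cons.prems(1) by (auto dest: precedes_in_set)
  qed
  moreover have "precedes p x y" if "x \<in> set p" "y \<in> set p" "x < y" for x y
    using Cons.prems that by auto
  ultimately show ?case using Cons by simp
qed simp

lemma precedes_of_consecutive:
  assumes d: "distinct p" and set: "set p = {1..n}"
    and consec: "\<And>k. k \<in> set p \<Longrightarrow> Suc k \<in> set p \<Longrightarrow> precedes p k (Suc k)"
  shows "x \<in> set p \<Longrightarrow> y \<in> set p \<Longrightarrow> x < y \<Longrightarrow> precedes p x y"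
proof (induction y)
  case (Suc y)
  show ?case
  proof (cases "x = y")
    case False
    then have "y \<in> set p" "x < y" using Suc.prems set by auto
    then show ?thesis using Suc consec precedes_trans[OF d] by blast
  qed (use Suc.prems consec in simp)
qed simp

lemma is_perm_without_descents:
  assumes p: "is_perm n p" and no_descent: "\<And>k. 1 \<le> k \<Longrightarrow> k \<le> n - 1 \<Longrightarrow> \<not> precedes p (Suc k) k"
  shows "p = [1..<Suc n]"
proof -
  have d: "distinct p" and set: "set p = {1..n}" using p by (auto simp: is_perm_def)
  have "precedes p k (Suc k)" if "k \<in> set p" "Suc k \<in> set p" for k
  proof -
    have "1 \<le> k" "k \<le> n - 1" using that set by auto
    then have "\<not> precedes p (Suc k) k" by (rule no_descent)
    then show ?thesis using precedes_total[OF that] by auto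
  qed
  then have "sorted_wrt (<) p"
    using sorted_wrt_of_precedes[OF d] precedes_of_consecutive[OF d set] by blast
  moreover have "sorted_wrt (<) [1..<Suc n]" by (rule sorted_wrt_upt)
  moreover have "set [1..<Suc n] = set p" unfolding set set_upt by (rule atLeastLessThanSuc_atLeastAtMost)
  ultimately show ?thesis
    using sorted_distinct_set_unique[of p "[1..<Suc n]"] unfolding strict_sorted_iff by (simp del: upt_Suc)
qed

lemma is_perm_map_adj_swap:
  assumes "is_perm n p" "1 \<le> k" "k \<le> n - 1"
  shows "is_perm n (map (adj_swap k) p)"
proof -
  have "adj_swap k ` {1..n} = {1..n}"
  proof
    show "adj_swap k ` {1..n} \<subseteq> {1..n}" using assms(2,3) by (auto simp: adj_swap_def)
    show "{1..n} \<subseteq> adj_swap k ` {1..n}"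
    proof
      fix x assume "x \<in> {1..n}"
      then have "adj_swap k x \<in> {1..n}" using assms(2,3) by (auto simp: adj_swap_def)
      then show "x \<in> adj_swap k ` {1..n}" by (metis adj_swap_adj_swap image_eqI)
    qed
  qed
  then show ?thesis using assms(1) inj_on_subset[OF inj_adj_swap[of k], of "set p"]
    by (simp add: is_perm_def distinct_map)
qed

text \<open>A potential that strictly increases whenever an adjacent transposition sorts the
  values k, k + 1.\<close>
definition position_weight :: "nat list \<Rightarrow> nat" where
  "position_weight p = (\<Sum>j<length p. j * p ! j)"

lemma position_weight_adj_swap:
  assumes d: "distinct p" and ij: "i < i'" "i' < length p" and p: "p ! i = Suc k" "p ! i' = k"
  shows "position_weight p < position_weight (map (adj_swap k) p)"
proof -
  define D where "D j = int j * (int (adj_swap k (p ! j)) - int (p ! j))" for j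
  have "int (position_weight (map (adj_swap k) p)) = (\<Sum>j<length p. int j * int (p ! j) + D j)"
    unfolding position_weight_def D_def by (simp add: of_nat_sum algebra_simps)
  also have "\<dots> = int (position_weight p) + (\<Sum>j<length p. D j)"
    unfolding position_weight_def by (simp add: sum.distrib of_nat_sum)
  also have "(\<Sum>j<length p. D j) = (\<Sum>j\<in>{i, i'}. D j)"
  proof (rule sum.mono_neutral_right)
    show "\<forall>j\<in>{..<length p} - {i, i'}. D j = 0"
    proof
      fix j assume j: "j \<in> {..<length p} - {i, i'}"
      then have "p ! j \<noteq> p ! i" "p ! j \<noteq> p ! i'" using d ij by (auto simp: nth_eq_iff_index_eq)
      then show "D j = 0" using p by (simp add: D_def adj_swap_def)
    qed
  qed (use ij in auto)
  also have "\<dots> = int i' - int i" using ij p by (simp add: D_def adj_swap_def)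
  finally show ?thesis using ij by simp
qed

lemma position_weight_le: "is_perm n p \<Longrightarrow> position_weight p \<le> n * n * n"
proof -
  assume p: "is_perm n p"
  then have len: "length p = n" using distinct_card[of p] by (auto simp: is_perm_def)
  have "j * p ! j \<le> n * n" if "j < n" for j
    using that p len by (intro mult_le_mono) (auto simp: is_perm_def dest!: nth_mem)
  then have "position_weight p \<le> (\<Sum>j<n. n * n)" unfolding position_weight_def len by (intro sum_mono) simp
  then show ?thesis by simp
qed

lemma adj_step_to_identity: "is_perm n p \<Longrightarrow> (adj_step n)\<^sup>*\<^sup>* p [1..<Suc n]"
proof (induction "n * n * n - position_weight p" arbitrary: p rule: less_induct)
  case less
  show ?case
  proof (cases "\<exists>k. 1 \<le> k \<and> k \<le> n - 1 \<and> precedes p (Suc k) k")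
    case False
    then show ?thesis using is_perm_without_descents[OF less.prems] by auto
  next
    case True
    then obtain k where k: "1 \<le> k" "k \<le> n - 1" "precedes p (Suc k) k" by blast
    let ?q = "map (adj_swap k) p"
    have q: "is_perm n ?q" using is_perm_map_adj_swap[OF less.prems k(1,2)] .
    obtain i i' where "i < i'" "i' < length p" "p ! i = Suc k" "p ! i' = k"
      using precedes_obtain_nth[OF k(3)] by blast
    then have "position_weight p < position_weight ?q"
      using position_weight_adj_swap less.prems by (simp add: is_perm_def)
    then have "n * n * n - position_weight ?q < n * n * n - position_weight p"
      using position_weight_le[OF q] by simp
    then have "(adj_step n)\<^sup>*\<^sup>* ?q [1..<Suc n]" using less.hyps q by blast
    moreover have "adj_step n p ?q" using k unfolding adj_step_def by blast
    ultimately show ?thesis by (rule converse_rtranclp_into_rtranclp[rotated])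
  qed
qed

lemma adj_step_connected:
  assumes "is_perm n p" "is_perm n q"
  shows "\<exists>m. (adj_step n ^^ m) p q"
proof -
  have "symp (adj_step n)" by (auto simp: symp_def adj_step_def comp_def)
  then have "(adj_step n)\<^sup>*\<^sup>* [1..<Suc n] q"
    using adj_step_to_identity[OF assms(2)] by (metis symp_rtranclp sympD)
  then have "(adj_step n)\<^sup>*\<^sup>* p q" using adj_step_to_identity[OF assms(1)] by (rule rtranclp_trans[rotated])
  then show ?thesis by (rule rtranclp_imp_relpowp)
qed

lemma adj_step_of_perm_dist_1:
  assumes "is_perm n p" "is_perm n q" "perm_dist n p q = 1"
  shows "adj_step n p q"
proof -
  have "(adj_step n ^^ perm_dist n p q) p q"
    unfolding perm_dist_def using adj_step_connected[OF assms(1,2)] by (rule LeastI_ex)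
  then show ?thesis unfolding assms(3) relpowp_1 .
qed

lemma Delta_sym: "Delta n x y = Delta n y x"
  unfolding Delta_def by (simp add: abs_minus_commute)

theorem theorem2:
  fixes n :: nat and \<pi> \<tau> :: "nat list"
  assumes "is_perm n \<pi>" and "is_perm n \<tau>"
    and "perm_dist n \<pi> \<tau> = 1"
  shows "Delta n (rsk_shape \<pi>) (rsk_shape \<tau>) \<le> sqrt (real n / 2)"
proof -
  obtain k where k: "1 \<le> k" "k \<le> n - 1" and \<tau>: "\<tau> = map (adj_swap k) \<pi>"
    using adj_step_of_perm_dist_1[OF assms] unfolding adj_step_def by blast
  have \<pi>: "\<pi> = map (adj_swap k) \<tau>" using \<tau> by (simp add: comp_def)
  have dist: "distinct \<pi>" "distinct \<tau>" and len: "length \<pi> = n" "length \<tau> = n"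
    using assms(1,2) distinct_card by (fastforce simp: is_perm_def)+
  have "k \<in> set \<pi>" "Suc k \<in> set \<pi>" using assms(1) k by (auto simp: is_perm_def)
  then consider "precedes \<pi> k (Suc k)" | "precedes \<pi> (Suc k) k"
    using precedes_total[of k \<pi> "Suc k"] by auto
  then show ?thesis
  proof cases
    case 1
    then show ?thesis using Delta_adj_swap_le[OF dist(1) len(1)] \<tau> by simp
  next
    case 2
    then have "precedes \<tau> k (Suc k)"
      using precedes_map[of \<pi> "Suc k" k "adj_swap k"] \<tau> by (simp add: adj_swap_def)
    then show ?thesis using Delta_adj_swap_le[OF dist(2) len(2)] \<pi> Delta_sym by metis
  qed
qed

end
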